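(* Let $l=(l_1,\dots,l_m)$ be an admissible cut length vector for $f$ with distinguished index $i_0$ (as in conditions (ii),(iii) of admissibility), let $q$ be the order of $\sigma$, and let $l'=(l'_1,\dots,l'_m)$ be obtained from $l$ by a SC-folding of length $l^*$, where $0<l^*<l_{i_0}$ and $u_{i_0}(l_{i_0}-l^* )\in\mathcal{W}^{true}(l)$; that is, $l'_{i_0}=l_{i_0}-l^*$, $l'_{\sigma^{-p}(i_0)}=l_{\sigma^{-p}(i_0)}-\lambda^{-p}l^*$ for $p=1,\dots,q-1$, and $l'_j=l_j=0$ for $j$ not in the $\sigma$-orbit of $i_0$. Then $l'$ is admissible, and its total length satisfies $\sum_i l'_i=\sum_i l_i-\left(1+\frac1\lambda+\cdots+\frac{1}{\lambda^{q-1}}\right)l^*$.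
   Context: Let $S$ be a compact surface with marked points $X=\{x_0,\dots,x_n\}$ and $f:S\to S$ a pseudo-Anosov homeomorphism relative to $X$ with $f(x_0)=x_0$, $f(X)=X$, invariant stable and unstable transverse measured foliations $(\mathcal{F}^s,\mu^s)$, $(\mathcal{F}^u,\mu^u)$ (measures fixed) and dilatation $\lambda>1$: $f$ multiplies the $\mu^s$-length of arcs in leaves of $\mathcal{F}^u$ by $\lambda$. True singularities are the singular points of the foliations. Let $u_1,\dots,u_m$ be the unstable separatrices at $x_0$, cyclically indexed around $x_0$, with $f(u_i)=u_{\sigma(i)}$. Let $u_i(t)$ be the point of $u_i$ at $\mu^s$-length $t$ from $x_0$. For a nonzero cut length vector $l\in\mathbb{R}_+^m$, the cut line along $u_i$ is $[x_0,u_i(l_i)]\subset u_i$, $\mathcal{L}(l)$ is the union of cut lines, and $\mathcal{W}^{true}(l)$ is the union of the stable leaf segments emanating from the true singularities, each taken up to its first intersection with $\mathcal{L}(l)$. The vector $l$ is admissible if (i) there is a $\sigma$-orbit $\mathcal{O}$ with $l_i\neq0$ iff $i\in\mathcal{O}$, and there is $i_0\in\mathcal{O}$ (the distinguished index) with (ii) $l_{\sigma(i)}=\lambda l_i$ for all $i\neq i_0$ and (iii) $u_{i_0}(l_{i_0})\in\mathcal{W}^{true}(l)$. *)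

theory Defs
  imports Complex_Main "HOL-Combinatorics.Permutations"
begin

text \<open>Separatrices are indexed by 0..m-1 (instead of 1..m).
  u i t is the point of the unstable separatrix u_i at mu^s-length t from x0.
  Gam is the set of stable leaf rays emanating from the true singularities,
  each parametrised by [0,infinity) starting at the singularity.
  Cut length vectors are functions nat => real, only indices below m matter.\<close>

definition cut_lines :: "nat \<Rightarrow> (nat \<Rightarrow> real \<Rightarrow> 'a) \<Rightarrow> (nat \<Rightarrow> real) \<Rightarrow> 'a set" where
  "cut_lines m u l = (\<Union>i\<in>{..<m}. u i ` {0..l i})"

definition W_true :: "nat \<Rightarrow> (nat \<Rightarrow> real \<Rightarrow> 'a) \<Rightarrow> (real \<Rightarrow> 'a) set \<Rightarrow> (nat \<Rightarrow> real) \<Rightarrow> 'a set" where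
  "W_true m u Gam l =
     {p. \<exists>\<gamma>\<in>Gam. \<exists>t\<ge>0. \<gamma> t = p \<and> (\<forall>s\<in>{0..<t}. \<gamma> s \<notin> cut_lines m u l)}"

definition sorbit :: "(nat \<Rightarrow> nat) \<Rightarrow> nat \<Rightarrow> nat set" where
  "sorbit \<sigma> i = {(\<sigma> ^^ k) i | k. True}"

definition perm_order :: "nat \<Rightarrow> (nat \<Rightarrow> nat) \<Rightarrow> nat" where
  "perm_order m \<sigma> = (LEAST n. 0 < n \<and> (\<forall>i<m. (\<sigma> ^^ n) i = i))"

definition admissible_at ::
  "nat \<Rightarrow> (nat \<Rightarrow> nat) \<Rightarrow> real \<Rightarrow> (nat \<Rightarrow> real \<Rightarrow> 'a) \<Rightarrow> (real \<Rightarrow> 'a) set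
     \<Rightarrow> (nat \<Rightarrow> real) \<Rightarrow> nat \<Rightarrow> bool" where
  "admissible_at m \<sigma> lam u Gam l i0 \<longleftrightarrow>
     (\<forall>i<m. 0 \<le> l i) \<and> (\<exists>i<m. l i \<noteq> 0) \<and>
     (\<exists>j<m. (\<forall>i<m. l i \<noteq> 0 \<longleftrightarrow> i \<in> sorbit \<sigma> j) \<and>
        i0 \<in> sorbit \<sigma> j \<and> i0 < m \<and>
        (\<forall>i<m. i \<noteq> i0 \<longrightarrow> l (\<sigma> i) = lam * l i) \<and>
        u i0 (l i0) \<in> W_true m u Gam l)"

definition admissible ::
  "nat \<Rightarrow> (nat \<Rightarrow> nat) \<Rightarrow> real \<Rightarrow> (nat \<Rightarrow> real \<Rightarrow> 'a) \<Rightarrow> (real \<Rightarrow> 'a) set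
     \<Rightarrow> (nat \<Rightarrow> real) \<Rightarrow> bool" where
  "admissible m \<sigma> lam u Gam l \<longleftrightarrow> (\<exists>i0. admissible_at m \<sigma> lam u Gam l i0)"

end

theory Submission
  imports Defs "HOL-Combinatorics.Cycles"
begin

text \<open>The rotation hypothesis makes all \<sigma>-orbits in {..<m} have the same length
  q = perm_order m \<sigma>, so the orbit of i0 is enumerated without repetition by
  (inv \<sigma> ^^ p) i0 for p < q. Admissibility with distinguished index i0 says precisely
  that l vanishes off this orbit and equals l i0 / lam ^ p at (inv \<sigma> ^^ p) i0. The
  folding subtracts lstar / lam ^ p there, so l' has the same shape with l i0 replaced by
  l i0 - lstar > 0. As l' only shortens cut lines, W_true can only grow and still contains
  the new endpoint; summing over the orbit gives the length formula.\<close>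

lemma funpow_rotation:
  fixes \<sigma> :: "nat \<Rightarrow> nat"
  assumes rot: "\<forall>i<m. \<sigma> i = (i + k) mod m" and "i < m"
  shows "(\<sigma> ^^ n) i = (i + n * k) mod m"
proof (induction n)
  case (Suc n)
  have "(\<sigma> ^^ Suc n) i = ((i + n * k) mod m + k) mod m"
    using Suc rot \<open>i < m\<close> by simp
  also have "\<dots> = (i + n * k + k) mod m"
    by (rule mod_add_left_eq)
  finally show ?case
    by (metis add.assoc add.commute mult_Suc)
qed (use \<open>i < m\<close> in simp)

text \<open>This is the only consequence of the rotation hypothesis that the argument needs.\<close>

definition semiregular_on :: "nat \<Rightarrow> (nat \<Rightarrow> nat) \<Rightarrow> bool" where
  "semiregular_on m \<sigma> \<longleftrightarrow> (\<forall>n. \<forall>x<m. (\<sigma> ^^ n) x = x \<longrightarrow> (\<forall>i<m. (\<sigma> ^^ n) i = i))"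

lemma semiregular_on_rotation:
  assumes rot: "\<forall>i<m. \<sigma> i = (i + k) mod m"
  shows "semiregular_on m \<sigma>"
  unfolding semiregular_on_def
proof (intro allI impI)
  fix n x i assume "x < m" "(\<sigma> ^^ n) x = x" "i < m"
  then have "(x + n * k) mod m = x"
    using funpow_rotation[OF rot] by simp
  then have "(i + n * k) mod m = i"
    using \<open>x < m\<close> \<open>i < m\<close>
    by (metis add.commute add_right_cancel div_mod_decomp mod_less mod_mult_self4 mult.commute)
  then show "(\<sigma> ^^ n) i = i"
    using funpow_rotation[OF rot \<open>i < m\<close>] by simp
qed

lemma perm_order_funpow:
  assumes "permutation \<sigma>"
  shows "0 < perm_order m \<sigma>" and "i < m \<Longrightarrow> (\<sigma> ^^ perm_order m \<sigma>) i = i"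
proof -
  obtain n where "\<sigma> ^^ n = id" "0 < n"
    using permutation_is_nilpotent[OF assms] .
  then have "\<exists>n. 0 < n \<and> (\<forall>i<m. (\<sigma> ^^ n) i = i)"
    by auto
  from LeastI_ex[OF this]
  show "0 < perm_order m \<sigma>" and "i < m \<Longrightarrow> (\<sigma> ^^ perm_order m \<sigma>) i = i"
    unfolding perm_order_def by auto
qed

lemma funpow_moves_below_perm_order:
  assumes "0 < n" "n < perm_order m \<sigma>"
  shows "\<exists>i<m. (\<sigma> ^^ n) i \<noteq> i"
  using assms not_less_Least unfolding perm_order_def by blast

lemma funpow_mod_period:
  assumes "\<forall>i<m. (g ^^ q) i = i" "\<forall>i<m. g i < m" "x < m"
  shows "(g ^^ n) x = (g ^^ (n mod q)) x"
proof -
  have closed: "(g ^^ r) y < m" if "y < m" for r y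
    using that assms(2) by (induction r) auto
  have "(g ^^ (t * q)) x = x" for t
    by (induction t) (simp_all add: funpow_add assms(1) closed \<open>x < m\<close>)
  then show ?thesis
    by (metis div_mult_mod_eq add.commute funpow_add comp_apply)
qed

lemma sorbit_self: "x \<in> sorbit \<sigma> x"
  unfolding sorbit_def by (auto intro: exI[of _ 0])

lemma sorbit_subset:
  assumes "y \<in> sorbit \<sigma> x"
  shows "sorbit \<sigma> y \<subseteq> sorbit \<sigma> x"
proof
  fix z assume "z \<in> sorbit \<sigma> y"
  then obtain a b where "y = (\<sigma> ^^ a) x" "z = (\<sigma> ^^ b) y"
    using assms unfolding sorbit_def by blast
  then have "z = (\<sigma> ^^ (b + a)) x"
    by (simp add: funpow_add)
  then show "z \<in> sorbit \<sigma> x"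
    unfolding sorbit_def by blast
qed

lemma W_true_antimono:
  assumes "\<forall>i<m. l' i \<le> l i"
  shows "W_true m u Gam l \<subseteq> W_true m u Gam l'"
proof -
  have "cut_lines m u l' \<subseteq> cut_lines m u l"
    using assms unfolding cut_lines_def by fastforce
  then show ?thesis
    unfolding W_true_def by blast
qed

context
  fixes m :: nat and \<sigma> :: "nat \<Rightarrow> nat"
  assumes perm: "\<sigma> permutes {..<m}"
    and semiregular: "semiregular_on m \<sigma>"
begin

private lemma permutation: "permutation \<sigma>"
  using perm permutation_permutes by blast

private lemma bij: "bij \<sigma>"
  using perm permutes_bij by blast

private lemma perm_less: "x < m \<Longrightarrow> \<sigma> x < m"
  using permutes_in_image[OF perm] by simp

lemma funpow_less: "x < m \<Longrightarrow> (\<sigma> ^^ n) x < m"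
  using permutes_in_image[OF permutes_funpow[OF perm]] by blast

lemma funpow_inv_less: "x < m \<Longrightarrow> (inv \<sigma> ^^ n) x < m"
  using permutes_in_image[OF permutes_funpow[OF permutes_inv[OF perm]]] by blast

lemma funpow_perm_order_inv:
  assumes "x < m" "p \<le> perm_order m \<sigma>"
  shows "(inv \<sigma> ^^ p) x = (\<sigma> ^^ (perm_order m \<sigma> - p)) x"
proof -
  have "(inv \<sigma> ^^ p) x = (\<sigma> ^^ perm_order m \<sigma>) ((inv \<sigma> ^^ p) x)"
    using perm_order_funpow(2)[OF permutation funpow_inv_less[OF \<open>x < m\<close>]] by simp
  also have "\<dots> = (\<sigma> ^^ (perm_order m \<sigma> - p)) ((\<sigma> ^^ p) ((inv \<sigma> ^^ p) x))"
    using assms(2) by (metis funpow_add le_add_diff_inverse2 comp_apply)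
  also have "\<dots> = (\<sigma> ^^ (perm_order m \<sigma> - p)) x"
    using fn_o_inv_fn_is_id[OF bij, of p] by (simp add: fun_eq_iff)
  finally show ?thesis .
qed

lemma inj_on_inv_orbit:
  assumes "x < m"
  shows "inj_on (\<lambda>p. (inv \<sigma> ^^ p) x) {..<perm_order m \<sigma>}"
proof -
  have no_return: False
    if "a < b" "b < perm_order m \<sigma>" "(inv \<sigma> ^^ a) x = (inv \<sigma> ^^ b) x" for a b
  proof -
    have "(\<sigma> ^^ (b - a)) x = (\<sigma> ^^ (b - a)) ((\<sigma> ^^ a) ((inv \<sigma> ^^ a) x))"
      using fn_o_inv_fn_is_id[OF bij, of a] by (simp add: fun_eq_iff)
    also have "\<dots> = (\<sigma> ^^ b) ((inv \<sigma> ^^ b) x)"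
      using that by (metis funpow_add le_add_diff_inverse2 less_imp_le comp_apply)
    also have "\<dots> = x"
      using fn_o_inv_fn_is_id[OF bij, of b] by (simp add: fun_eq_iff)
    finally have "\<forall>i<m. (\<sigma> ^^ (b - a)) i = i"
      using semiregular \<open>x < m\<close> unfolding semiregular_on_def by blast
    moreover have "\<exists>i<m. (\<sigma> ^^ (b - a)) i \<noteq> i"
      using that by (intro funpow_moves_below_perm_order) auto
    ultimately show False
      by blast
  qed
  show ?thesis
  proof (rule inj_onI)
    fix a b
    assume "a \<in> {..<perm_order m \<sigma>}" "b \<in> {..<perm_order m \<sigma>}"
      and "(inv \<sigma> ^^ a) x = (inv \<sigma> ^^ b) x"
    then show "a = b"
      using no_return by (metis lessThan_iff linorder_neqE_nat)
  qed
qed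

lemma sorbit_eq_inv_orbit:
  assumes "x < m"
  shows "sorbit \<sigma> x = (\<lambda>p. (inv \<sigma> ^^ p) x) ` {..<perm_order m \<sigma>}"
proof
  let ?q = "perm_order m \<sigma>"
  have q: "0 < ?q"
    by (rule perm_order_funpow(1)[OF permutation])
  show "sorbit \<sigma> x \<subseteq> (\<lambda>p. (inv \<sigma> ^^ p) x) ` {..<?q}"
  proof
    fix y assume "y \<in> sorbit \<sigma> x"
    then obtain n where "y = (\<sigma> ^^ n) x"
      unfolding sorbit_def by blast
    also have "\<dots> = (\<sigma> ^^ (n mod ?q)) x"
      by (rule funpow_mod_period[where m = m])
        (simp_all add: perm_order_funpow(2)[OF permutation] perm_less \<open>x < m\<close>)
    also have "\<dots> = (inv \<sigma> ^^ ((?q - n mod ?q) mod ?q)) x"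
      using funpow_perm_order_inv[OF \<open>x < m\<close>, of "?q - n mod ?q"] q
      by (cases "n mod ?q = 0") (simp_all add: diff_less)
    finally have "y = (inv \<sigma> ^^ ((?q - n mod ?q) mod ?q)) x" .
    moreover have "(?q - n mod ?q) mod ?q < ?q"
      using q by simp
    ultimately show "y \<in> (\<lambda>p. (inv \<sigma> ^^ p) x) ` {..<?q}"
      by blast
  qed
  show "(\<lambda>p. (inv \<sigma> ^^ p) x) ` {..<?q} \<subseteq> sorbit \<sigma> x"
  proof
    fix y assume "y \<in> (\<lambda>p. (inv \<sigma> ^^ p) x) ` {..<?q}"
    then obtain p where "p < ?q" "y = (inv \<sigma> ^^ p) x"
      by blast
    then have "y = (\<sigma> ^^ (?q - p)) x"
      using funpow_perm_order_inv[OF \<open>x < m\<close>] by simp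
    then show "y \<in> sorbit \<sigma> x"
      unfolding sorbit_def by blast
  qed
qed

lemma sorbit_eq:
  assumes "j < m" "x \<in> sorbit \<sigma> j"
  shows "sorbit \<sigma> x = sorbit \<sigma> j"
proof
  show "sorbit \<sigma> x \<subseteq> sorbit \<sigma> j"
    using assms(2) by (rule sorbit_subset)
  obtain a where x: "x = (\<sigma> ^^ a) j"
    using assms(2) unfolding sorbit_def by blast
  then have "x < m"
    using funpow_less[OF \<open>j < m\<close>] by simp
  have "j = (inv \<sigma> ^^ a) x"
    using x inv_fn_o_fn_is_id[OF bij, of a] by (simp add: fun_eq_iff)
  also have "\<dots> = (inv \<sigma> ^^ (a mod perm_order m \<sigma>)) x"
    by (rule funpow_mod_period[where m = m])
      (simp_all add: funpow_perm_order_inv funpow_inv_less[of _ 1, simplified] \<open>x < m\<close>)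
  finally have "j \<in> sorbit \<sigma> x"
    using sorbit_eq_inv_orbit[OF \<open>x < m\<close>] perm_order_funpow(1)[OF permutation] by simp
  then show "sorbit \<sigma> j \<subseteq> sorbit \<sigma> x"
    by (rule sorbit_subset)
qed

lemma perm_mem_sorbit_iff:
  assumes "i < m" "x < m"
  shows "\<sigma> i \<in> sorbit \<sigma> x \<longleftrightarrow> i \<in> sorbit \<sigma> x"
proof
  have step: "\<sigma> i \<in> sorbit \<sigma> i"
    unfolding sorbit_def by (auto intro: exI[of _ 1])
  show "\<sigma> i \<in> sorbit \<sigma> x \<Longrightarrow> i \<in> sorbit \<sigma> x"
    using sorbit_eq[OF \<open>x < m\<close>] sorbit_eq[OF \<open>i < m\<close> step] sorbit_self by metis
  show "i \<in> sorbit \<sigma> x \<Longrightarrow> \<sigma> i \<in> sorbit \<sigma> x"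
    using step sorbit_subset by blast
qed

lemma all_lessThan_by_sorbit:
  assumes "x < m"
    and "\<forall>i<m. i \<notin> sorbit \<sigma> x \<longrightarrow> P i"
    and "\<forall>p<perm_order m \<sigma>. P ((inv \<sigma> ^^ p) x)"
  shows "\<forall>i<m. P i"
proof (intro allI impI)
  fix i assume "i < m"
  show "P i"
  proof (cases "i \<in> sorbit \<sigma> x")
    case True
    then obtain p where "p < perm_order m \<sigma>" "i = (inv \<sigma> ^^ p) x"
      unfolding sorbit_eq_inv_orbit[OF \<open>x < m\<close>] by blast
    then show ?thesis
      using assms(3) by simp
  next
    case False
    then show ?thesis
      using assms(2) \<open>i < m\<close> by simp
  qed
qed

lemma sum_lessThan_eq_sum_inv_orbit:
  assumes "x < m" "\<forall>i<m. i \<notin> sorbit \<sigma> x \<longrightarrow> f i = 0"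
  shows "(\<Sum>i<m. f i) = (\<Sum>p<perm_order m \<sigma>. f ((inv \<sigma> ^^ p) x))"
proof -
  have "sorbit \<sigma> x \<subseteq> {..<m}"
    using sorbit_eq_inv_orbit[OF \<open>x < m\<close>] funpow_inv_less[OF \<open>x < m\<close>] by auto
  then have "(\<Sum>i<m. f i) = (\<Sum>i\<in>sorbit \<sigma> x. f i)"
    using assms(2) by (intro sum.mono_neutral_right) auto
  also have "\<dots> = (\<Sum>p<perm_order m \<sigma>. f ((inv \<sigma> ^^ p) x))"
    unfolding sorbit_eq_inv_orbit[OF \<open>x < m\<close>]
    by (rule sum.reindex[OF inj_on_inv_orbit[OF \<open>x < m\<close>], unfolded comp_def])
  finally show ?thesis .
qed

lemma geometric_along_inv_orbit:
  fixes l :: "nat \<Rightarrow> 'b::field"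
  assumes "lam \<noteq> 0" "i0 < m"
    and step: "\<forall>i<m. i \<noteq> i0 \<longrightarrow> l (\<sigma> i) = lam * l i"
    and "p < perm_order m \<sigma>"
  shows "l ((inv \<sigma> ^^ p) i0) = l i0 / lam ^ p"
  using \<open>p < perm_order m \<sigma>\<close>
proof (induction p)
  case (Suc p)
  let ?y = "(inv \<sigma> ^^ Suc p) i0"
  have "?y \<noteq> i0"
    using inj_onD[OF inj_on_inv_orbit[OF \<open>i0 < m\<close>], of "Suc p" 0] Suc.prems by auto
  then have "l (\<sigma> ?y) = lam * l ?y"
    using step funpow_inv_less[OF \<open>i0 < m\<close>] by blast
  moreover have "\<sigma> ?y = (inv \<sigma> ^^ p) i0"
    using surj_f_inv_f[OF bij_is_surj[OF bij]] by simp
  ultimately have "l ((inv \<sigma> ^^ p) i0) = lam * l ?y"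
    by simp
  then show ?case
    using Suc \<open>lam \<noteq> 0\<close> by (simp add: field_simps)
qed simp

lemma admissible_at_support:
  assumes "admissible_at m \<sigma> lam u Gam l i0"
  shows "i0 < m" and "i < m \<Longrightarrow> l i \<noteq> 0 \<longleftrightarrow> i \<in> sorbit \<sigma> i0"
proof -
  obtain j where "j < m" "\<forall>i<m. l i \<noteq> 0 \<longleftrightarrow> i \<in> sorbit \<sigma> j"
    and "i0 \<in> sorbit \<sigma> j" "i0 < m"
    using assms unfolding admissible_at_def by blast
  moreover have "sorbit \<sigma> i0 = sorbit \<sigma> j"
    using sorbit_eq[OF \<open>j < m\<close> \<open>i0 \<in> sorbit \<sigma> j\<close>] .
  ultimately show "i0 < m" and "i < m \<Longrightarrow> l i \<noteq> 0 \<longleftrightarrow> i \<in> sorbit \<sigma> i0"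
    by simp_all
qed

lemma admissible_at_along_inv_orbit:
  assumes "admissible_at m \<sigma> lam u Gam l i0" "lam \<noteq> 0" "p < perm_order m \<sigma>"
  shows "l ((inv \<sigma> ^^ p) i0) = l i0 / lam ^ p"
proof (rule geometric_along_inv_orbit)
  show "i0 < m"
    using admissible_at_support(1)[OF assms(1)] .
  show "\<forall>i<m. i \<noteq> i0 \<longrightarrow> l (\<sigma> i) = lam * l i"
    using assms(1) unfolding admissible_at_def by blast
qed (use assms in auto)

lemma admissible_atI_along_inv_orbit:
  assumes "i0 < m" "0 < c" "0 < lam"
    and orbit: "\<And>p. p < perm_order m \<sigma> \<Longrightarrow> l ((inv \<sigma> ^^ p) i0) = c / lam ^ p"
    and outside: "\<And>i. i < m \<Longrightarrow> i \<notin> sorbit \<sigma> i0 \<Longrightarrow> l i = 0"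
    and "u i0 (l i0) \<in> W_true m u Gam l"
  shows "admissible_at m \<sigma> lam u Gam l i0"
proof -
  have support: "\<forall>i<m. 0 \<le> l i \<and> (l i \<noteq> 0 \<longleftrightarrow> i \<in> sorbit \<sigma> i0)"
  proof (rule all_lessThan_by_sorbit[OF \<open>i0 < m\<close>])
    show "\<forall>i<m. i \<notin> sorbit \<sigma> i0 \<longrightarrow> 0 \<le> l i \<and> (l i \<noteq> 0 \<longleftrightarrow> i \<in> sorbit \<sigma> i0)"
      using outside by auto
    show "\<forall>p<perm_order m \<sigma>. 0 \<le> l ((inv \<sigma> ^^ p) i0) \<and>
        (l ((inv \<sigma> ^^ p) i0) \<noteq> 0 \<longleftrightarrow> (inv \<sigma> ^^ p) i0 \<in> sorbit \<sigma> i0)"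
    proof (intro allI impI)
      fix p assume "p < perm_order m \<sigma>"
      then have "(inv \<sigma> ^^ p) i0 \<in> sorbit \<sigma> i0"
        unfolding sorbit_eq_inv_orbit[OF \<open>i0 < m\<close>] by blast
      moreover have "0 < l ((inv \<sigma> ^^ p) i0)"
        using orbit[OF \<open>p < perm_order m \<sigma>\<close>] \<open>0 < c\<close> \<open>0 < lam\<close> by simp
      ultimately show "0 \<le> l ((inv \<sigma> ^^ p) i0) \<and>
          (l ((inv \<sigma> ^^ p) i0) \<noteq> 0 \<longleftrightarrow> (inv \<sigma> ^^ p) i0 \<in> sorbit \<sigma> i0)"
        by simp
    qed
  qed
  have step: "\<forall>i<m. i \<noteq> i0 \<longrightarrow> l (\<sigma> i) = lam * l i"
  proof (rule all_lessThan_by_sorbit[OF \<open>i0 < m\<close>])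
    show "\<forall>i<m. i \<notin> sorbit \<sigma> i0 \<longrightarrow> i \<noteq> i0 \<longrightarrow> l (\<sigma> i) = lam * l i"
    proof (intro allI impI)
      fix i assume "i < m" "i \<notin> sorbit \<sigma> i0"
      then have "\<sigma> i \<notin> sorbit \<sigma> i0"
        using perm_mem_sorbit_iff[OF \<open>i < m\<close> \<open>i0 < m\<close>] by blast
      then show "l (\<sigma> i) = lam * l i"
        using outside perm_less \<open>i < m\<close> \<open>i \<notin> sorbit \<sigma> i0\<close> by simp
    qed
    show "\<forall>p<perm_order m \<sigma>. (inv \<sigma> ^^ p) i0 \<noteq> i0 \<longrightarrow>
        l (\<sigma> ((inv \<sigma> ^^ p) i0)) = lam * l ((inv \<sigma> ^^ p) i0)"
    proof (intro allI impI)
      fix p assume p: "p < perm_order m \<sigma>" "(inv \<sigma> ^^ p) i0 \<noteq> i0"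
      then have "p \<noteq> 0"
        by (metis funpow_0)
      then obtain r where r: "p = Suc r"
        using not0_implies_Suc by blast
      then have "\<sigma> ((inv \<sigma> ^^ p) i0) = (inv \<sigma> ^^ r) i0"
        using surj_f_inv_f[OF bij_is_surj[OF bij]] by simp
      moreover have "l ((inv \<sigma> ^^ r) i0) = lam * l ((inv \<sigma> ^^ p) i0)"
        using r p(1) orbit[of r] orbit[of p] \<open>0 < lam\<close> by simp
      ultimately show "l (\<sigma> ((inv \<sigma> ^^ p) i0)) = lam * l ((inv \<sigma> ^^ p) i0)"
        by simp
    qed
  qed
  have "l i0 \<noteq> 0"
    using orbit[OF perm_order_funpow(1)[OF permutation]] \<open>0 < c\<close> by simp
  then show ?thesis
    unfolding admissible_at_def
    using support step \<open>i0 < m\<close> sorbit_self assms(6) by blast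
qed

lemma sc_folding_along_inv_orbit:
  assumes "admissible_at m \<sigma> lam u Gam l i0" "lam \<noteq> 0"
    and "l' i0 = l i0 - lstar"
    and "\<forall>p\<in>{1..perm_order m \<sigma> - 1}.
           l' ((inv \<sigma> ^^ p) i0) = l ((inv \<sigma> ^^ p) i0) - lstar / lam ^ p"
    and "p < perm_order m \<sigma>"
  shows "l' ((inv \<sigma> ^^ p) i0) = (l i0 - lstar) / lam ^ p"
proof (cases "p = 0")
  case False
  then have "l' ((inv \<sigma> ^^ p) i0) = l ((inv \<sigma> ^^ p) i0) - lstar / lam ^ p"
    using assms(4,5) by simp
  then show ?thesis
    using admissible_at_along_inv_orbit[OF assms(1,2,5)] by (simp add: diff_divide_distrib)
qed (use assms(3) in simp)

end

theorem proposition4p2: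
  fixes m :: nat and \<sigma> :: "nat \<Rightarrow> nat" and lam :: real
    and u :: "nat \<Rightarrow> real \<Rightarrow> 'a" and Gam :: "(real \<Rightarrow> 'a) set"
    and l l' :: "nat \<Rightarrow> real" and i0 :: nat and lstar :: real
  assumes lam: "lam > 1"
    and m: "0 < m"
    and perm: "\<sigma> permutes {..<m}"
    and rot: "\<exists>k. \<forall>i<m. \<sigma> i = (i + k) mod m"
    and adm: "admissible_at m \<sigma> lam u Gam l i0"
    and ls: "0 < lstar" "lstar < l i0"
    and fold_pt: "u i0 (l i0 - lstar) \<in> W_true m u Gam l"
    and l'_i0: "l' i0 = l i0 - lstar"
    and l'_orb: "\<forall>p\<in>{1..perm_order m \<sigma> - 1}.
                   l' ((inv \<sigma> ^^ p) i0) = l ((inv \<sigma> ^^ p) i0) - lstar / lam ^ p"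
    and l'_out: "\<forall>j<m. j \<notin> sorbit \<sigma> i0 \<longrightarrow> l' j = l j"
  shows "admissible m \<sigma> lam u Gam l' \<and>
         (\<Sum>i<m. l' i) = (\<Sum>i<m. l i) - (\<Sum>p<perm_order m \<sigma>. 1 / lam ^ p) * lstar"
proof -
  have semireg: "semiregular_on m \<sigma>"
    using rot semiregular_on_rotation by blast
  have i0: "i0 < m"
    using admissible_at_support(1)[OF perm semireg adm] .
  have outside: "\<forall>i<m. i \<notin> sorbit \<sigma> i0 \<longrightarrow> l' i = 0 \<and> l i = 0"
    using admissible_at_support(2)[OF perm semireg adm] l'_out by auto
  have l_orbit: "\<forall>p<perm_order m \<sigma>. l ((inv \<sigma> ^^ p) i0) = l i0 / lam ^ p"
    using admissible_at_along_inv_orbit[OF perm semireg adm] lam by simp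
  have l'_orbit: "\<forall>p<perm_order m \<sigma>. l' ((inv \<sigma> ^^ p) i0) = (l i0 - lstar) / lam ^ p"
    using sc_folding_along_inv_orbit[OF perm semireg adm _ l'_i0 l'_orb] lam by simp
  have le: "\<forall>i<m. l' i \<le> l i"
    using all_lessThan_by_sorbit[OF perm semireg i0, of "\<lambda>i. l' i \<le> l i"] outside
      l_orbit l'_orbit lam ls by (simp add: divide_right_mono)
  have "u i0 (l' i0) \<in> W_true m u Gam l'"
    using W_true_antimono[OF le, of u Gam] fold_pt l'_i0 by auto
  then have "admissible_at m \<sigma> lam u Gam l' i0"
    using admissible_atI_along_inv_orbit[OF perm semireg i0, of "l i0 - lstar" lam l'] l'_orbit
      outside ls lam by simp
  moreover have "(\<Sum>i<m. l i - l' i) = (\<Sum>p<perm_order m \<sigma>. lstar / lam ^ p)"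
    using sum_lessThan_eq_sum_inv_orbit[OF perm semireg i0, of "\<lambda>i. l i - l' i"] outside
      l_orbit l'_orbit by (simp add: diff_divide_distrib)
  ultimately show ?thesis
    unfolding admissible_def by (auto simp: sum_subtractf sum_distrib_right)
qed

end
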